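(* In $\lambda_{\mathrm{act}}$: if $\Gamma ; \Delta \vdash \mathcal{C}$ and $\mathcal{C} \equiv \mathcal{D}$ for some configuration $\mathcal{D}$, then $\Gamma ; \Delta \vdash \mathcal{D}$.
   Context: The calculus $\lambda_{\mathrm{act}}$. Types $A,B,C ::= \mathbf{1} \mid A \xrightarrow{C} B \mid \mathsf{ActorRef}(A)$; values $V,W ::= \alpha \mid \lambda x.M \mid ()$ ($\alpha$ a variable or name); computations $M,N ::= V\,W \mid \mathbf{let}\ x \Leftarrow M\ \mathbf{in}\ N \mid \mathbf{return}\ V \mid \mathbf{spawn}\ M \mid \mathbf{send}\ V\ W \mid \mathbf{receive} \mid \mathbf{self}$. Value typing $\Gamma\vdash V:A$ ($\alpha$ looked up in $\Gamma$; $\lambda x.M : A\xrightarrow{C}B$ if $\Gamma,x:A\mid C\vdash M:B$; $():\mathbf 1$) and computation typing $\Gamma\mid C\vdash M:A$ with mailbox type $C$ ($V\,W:B$ if $V:A\xrightarrow{C}B$, $W:A$; $\mathbf{let}$ with both parts under mailbox $C$; $\mathbf{return}\ V:A$ if $V:A$; $\mathbf{send}\ V\ W:\mathbf 1$ if $V:A$, $W:\mathsf{ActorRef}(A)$; $\Gamma\mid A\vdash\mathbf{receive}:A$; $\Gamma\mid C\vdash \mathbf{spawn}\ M:\mathsf{ActorRef}(A)$ if $\Gamma\mid A\vdash M:\mathbf 1$; $\Gamma\mid A\vdash\mathbf{self}:\mathsf{ActorRef}(A)$). Configurations $\mathcal{C},\mathcal{D},\mathcal{E} ::= \mathcal{C}\parallel\mathcal{D}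 \mid (\nu a)\mathcal{C} \mid \langle a, M, \vec V\rangle$, where $\langle a, M, \vec V\rangle$ is an actor named $a$ evaluating $M$ with mailbox $\vec V = V_1\cdot\ldots\cdot V_n$. Configuration contexts $G ::= [\,]\mid G\parallel\mathcal{C}\mid(\nu a)G$. Configuration typing $\Gamma;\Delta\vdash\mathcal{C}$ ($\Delta$ linear, names to types): (Par) $\Gamma;\Delta_1\vdash\mathcal{C}_1$ and $\Gamma;\Delta_2\vdash\mathcal{C}_2$ give $\Gamma;\Delta_1,\Delta_2\vdash\mathcal{C}_1\parallel\mathcal{C}_2$ (disjoint); (Pid) $\Gamma,a:\mathsf{ActorRef}(A);\Delta,a:A\vdash\mathcal{C}$ gives $\Gamma;\Delta\vdash(\nu a)\mathcal{C}$; (Actor) if $\Gamma,a:\mathsf{ActorRef}(A)\mid A\vdash M:\mathbf 1$ and $\Gamma,a:\mathsf{ActorRef}(A)\vdash V_i:A$ for all $i$, then $\Gamma,a:\mathsf{ActorRef}(A);a:A\vdash\langle a,M,\vec V\rangle$. Structural congruence $\equiv$: the least congruence closed under $G[-]$ with $\mathcal{C}\parallel\mathcal{D}\equiv\mathcal{D}\parallel\mathcal{C}$, $\mathcal{C}\parallel(\mathcal{D}\parallel\mathcal{E})\equiv(\mathcal{C}\parallel\mathcal{D})\parallel\mathcal{E}$, and $\mathcal{C}\parallel(\nu a)\mathcal{D}\equiv(\nu a)(\mathcal{C}\parallel\mathcal{D})$ if $a\notin\mathsf{fv}(\mathcal{C})$. *)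

theory Defs
  imports Main
begin

text \<open>The actor calculus lambda_act. Variables and actor names share one
  syntactic category of identifiers (alpha ::= variable | name).\<close>

type_synonym ident = string

datatype ty =
    TUnit
  | TFun ty ty ty          (* TFun A C B  =  A -C-> B *)
  | TActorRef ty

datatype val =
    VId ident
  | VLam ident comp
  | VUnit
and comp =
    CApp val val
  | CLet ident comp comp
  | CReturn val
  | CSpawn comp
  | CSend val val
  | CReceive
  | CSelf

datatype config =
    Par config config
  | Nu ident config
  | Actor ident comp "val list"

primrec fv_val :: "val \<Rightarrow> ident set" and fv_comp :: "comp \<Rightarrow> ident set" where
  "fv_val (VId a) = {a}"
| "fv_val (VLam x M) = fv_comp M - {x}"
| "fv_val VUnit = {}"
| "fv_comp (CApp V W) = fv_val V \<union> fv_val W"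
| "fv_comp (CLet x M N) = fv_comp M \<union> (fv_comp N - {x})"
| "fv_comp (CReturn V) = fv_val V"
| "fv_comp (CSpawn M) = fv_comp M"
| "fv_comp (CSend V W) = fv_val V \<union> fv_val W"
| "fv_comp CReceive = {}"
| "fv_comp CSelf = {}"

primrec fv_config :: "config \<Rightarrow> ident set" where
  "fv_config (Par C D) = fv_config C \<union> fv_config D"
| "fv_config (Nu a C) = fv_config C - {a}"
| "fv_config (Actor a M Vs) = {a} \<union> fv_comp M \<union> (\<Union>V\<in>set Vs. fv_val V)"

type_synonym tenv = "ident \<Rightarrow> ty option"

text \<open>Value typing  \<Gamma> \<turnstile> V : A  and computation typing  \<Gamma> | C \<turnstile> M : A
  (here: comp_ty \<Gamma> C M A, with C the mailbox type).  \<Gamma>, x:A is map update.\<close>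
inductive val_ty :: "tenv \<Rightarrow> val \<Rightarrow> ty \<Rightarrow> bool"
  and comp_ty :: "tenv \<Rightarrow> ty \<Rightarrow> comp \<Rightarrow> ty \<Rightarrow> bool" where
  T_Id: "\<Gamma> a = Some A \<Longrightarrow> val_ty \<Gamma> (VId a) A"
| T_Lam: "comp_ty (\<Gamma>(x \<mapsto> A)) C M B \<Longrightarrow> val_ty \<Gamma> (VLam x M) (TFun A C B)"
| T_Unit: "val_ty \<Gamma> VUnit TUnit"
| T_App: "val_ty \<Gamma> V (TFun A C B) \<Longrightarrow> val_ty \<Gamma> W A \<Longrightarrow> comp_ty \<Gamma> C (CApp V W) B"
| T_Let: "comp_ty \<Gamma> C M A \<Longrightarrow> comp_ty (\<Gamma>(x \<mapsto> A)) C N B \<Longrightarrow> comp_ty \<Gamma> C (CLet x M N) B"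
| T_Return: "val_ty \<Gamma> V A \<Longrightarrow> comp_ty \<Gamma> C (CReturn V) A"
| T_Send: "val_ty \<Gamma> V A \<Longrightarrow> val_ty \<Gamma> W (TActorRef A) \<Longrightarrow> comp_ty \<Gamma> C (CSend V W) TUnit"
| T_Receive: "comp_ty \<Gamma> A CReceive A"
| T_Spawn: "comp_ty \<Gamma> A M TUnit \<Longrightarrow> comp_ty \<Gamma> C (CSpawn M) (TActorRef A)"
| T_Self: "comp_ty \<Gamma> A CSelf (TActorRef A)"

inductive config_ty :: "tenv \<Rightarrow> (ident \<Rightarrow> ty option) \<Rightarrow> config \<Rightarrow> bool" where
  T_Par: "config_ty \<Gamma> \<Delta>1 C1 \<Longrightarrow> config_ty \<Gamma> \<Delta>2 C2 \<Longrightarrow> dom \<Delta>1 \<inter> dom \<Delta>2 = {}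
          \<Longrightarrow> config_ty \<Gamma> (\<Delta>1 ++ \<Delta>2) (Par C1 C2)"
| T_Pid: "config_ty (\<Gamma>(a \<mapsto> TActorRef A)) (\<Delta>(a \<mapsto> A)) C \<Longrightarrow> a \<notin> dom \<Delta>
          \<Longrightarrow> config_ty \<Gamma> \<Delta> (Nu a C)"
| T_Actor: "\<Gamma> a = Some (TActorRef A) \<Longrightarrow> comp_ty \<Gamma> A M TUnit \<Longrightarrow> (\<forall>V\<in>set Vs. val_ty \<Gamma> V A)
          \<Longrightarrow> config_ty \<Gamma> [a \<mapsto> A] (Actor a M Vs)"

inductive struct_cong :: "config \<Rightarrow> config \<Rightarrow> bool" (infix "\<equiv>\<^sub>c" 50) where
  SC_refl: "C \<equiv>\<^sub>c C"
| SC_sym: "C \<equiv>\<^sub>c D \<Longrightarrow> D \<equiv>\<^sub>c C"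
| SC_trans: "C \<equiv>\<^sub>c D \<Longrightarrow> D \<equiv>\<^sub>c E \<Longrightarrow> C \<equiv>\<^sub>c E"
| SC_comm: "Par C D \<equiv>\<^sub>c Par D C"
| SC_assoc: "Par C (Par D E) \<equiv>\<^sub>c Par (Par C D) E"
| SC_extr: "a \<notin> fv_config C \<Longrightarrow> Par C (Nu a D) \<equiv>\<^sub>c Nu a (Par C D)"
| SC_ctx_par: "C \<equiv>\<^sub>c D \<Longrightarrow> Par C E \<equiv>\<^sub>c Par D E"
| SC_ctx_nu: "C \<equiv>\<^sub>c D \<Longrightarrow> Nu a C \<equiv>\<^sub>c Nu a D"

end

theory Submission
  imports Defs
begin

text \<open>Typing is invariant in both directions under each axiom and context rule of structural
  congruence, so by induction on \<open>\<equiv>\<^sub>c\<close> congruent configurations are typable in exactly the same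
  environments. The only non-trivial axiom is scope extrusion: the side condition
  \<open>a \<notin> fv_config C\<close> means that \<open>C\<close> neither reads \<open>a\<close> from \<open>\<Gamma>\<close> nor owns it in \<open>\<Delta>\<close>, so adding
  or removing the binding of \<open>a\<close> does not affect the typing of \<open>C\<close>.\<close>

lemma val_ty_comp_ty_env_cong:
  "val_ty \<Gamma> V A \<Longrightarrow> (\<forall>x\<in>fv_val V. \<Gamma>' x = \<Gamma> x) \<Longrightarrow> val_ty \<Gamma>' V A"
  "comp_ty \<Gamma> C M B \<Longrightarrow> (\<forall>x\<in>fv_comp M. \<Gamma>' x = \<Gamma> x) \<Longrightarrow> comp_ty \<Gamma>' C M B"
  by (induction arbitrary: \<Gamma>' and \<Gamma>' rule: val_ty_comp_ty.inducts)
    (auto intro!: val_ty_comp_ty.intros)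

lemma config_ty_env_cong:
  "config_ty \<Gamma> \<Delta> C \<Longrightarrow> (\<forall>x\<in>fv_config C. \<Gamma>' x = \<Gamma> x) \<Longrightarrow> config_ty \<Gamma>' \<Delta> C"
proof (induction arbitrary: \<Gamma>' rule: config_ty.induct)
  case (T_Actor \<Gamma> a A M Vs)
  have "comp_ty \<Gamma>' A M TUnit" "\<forall>V\<in>set Vs. val_ty \<Gamma>' V A"
    using T_Actor by (auto intro: val_ty_comp_ty_env_cong)
  moreover have "\<Gamma>' a = Some (TActorRef A)"
    using T_Actor by simp
  ultimately show ?case
    by (intro config_ty.T_Actor)
next
  case (T_Pid \<Gamma> a A \<Delta> C)
  have "config_ty (\<Gamma>'(a \<mapsto> TActorRef A)) (\<Delta>(a \<mapsto> A)) C"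
    by (rule T_Pid.IH) (use T_Pid.prems in auto)
  then show ?case
    using T_Pid.hyps(2) by (rule config_ty.T_Pid)
qed (auto intro: config_ty.T_Par)

lemma config_ty_dom_subset_fv: "config_ty \<Gamma> \<Delta> C \<Longrightarrow> dom \<Delta> \<subseteq> fv_config C"
  by (induction rule: config_ty.induct) auto

lemma config_ty_fresh_upd_iff:
  "a \<notin> fv_config C \<Longrightarrow> config_ty (\<Gamma>(a \<mapsto> T)) \<Delta> C \<longleftrightarrow> config_ty \<Gamma> \<Delta> C"
  by (auto elim!: config_ty_env_cong)

inductive_cases config_ty_ParE: "config_ty \<Gamma> \<Delta> (Par C D)"
inductive_cases config_ty_NuE: "config_ty \<Gamma> \<Delta> (Nu a C)"

lemma config_ty_Par_commute:
  "config_ty \<Gamma> \<Delta> (Par C D) \<Longrightarrow> config_ty \<Gamma> \<Delta> (Par D C)"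
  by (erule config_ty_ParE) (metis config_ty.T_Par inf_commute map_add_comm)

lemma config_ty_Par_assoc:
  "config_ty \<Gamma> \<Delta> (Par C (Par D E)) \<longleftrightarrow> config_ty \<Gamma> \<Delta> (Par (Par C D) E)"
proof
  assume "config_ty \<Gamma> \<Delta> (Par C (Par D E))"
  then obtain \<Delta>1 \<Delta>23 \<Delta>2 \<Delta>3 where "\<Delta> = \<Delta>1 ++ \<Delta>23" "\<Delta>23 = \<Delta>2 ++ \<Delta>3"
    and "config_ty \<Gamma> \<Delta>1 C" "config_ty \<Gamma> \<Delta>2 D" "config_ty \<Gamma> \<Delta>3 E"
    and "dom \<Delta>1 \<inter> dom \<Delta>23 = {}" "dom \<Delta>2 \<inter> dom \<Delta>3 = {}"
    by (elim config_ty_ParE)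
  then show "config_ty \<Gamma> \<Delta> (Par (Par C D) E)"
    using config_ty.T_Par[of \<Gamma> "\<Delta>1 ++ \<Delta>2" "Par C D" \<Delta>3 E]
    by (auto intro: config_ty.T_Par)
next
  assume "config_ty \<Gamma> \<Delta> (Par (Par C D) E)"
  then obtain \<Delta>12 \<Delta>1 \<Delta>2 \<Delta>3 where "\<Delta> = \<Delta>12 ++ \<Delta>3" "\<Delta>12 = \<Delta>1 ++ \<Delta>2"
    and "config_ty \<Gamma> \<Delta>1 C" "config_ty \<Gamma> \<Delta>2 D" "config_ty \<Gamma> \<Delta>3 E"
    and "dom \<Delta>1 \<inter> dom \<Delta>2 = {}" "dom \<Delta>12 \<inter> dom \<Delta>3 = {}"
    by (elim config_ty_ParE)
  moreover from this have "config_ty \<Gamma> (\<Delta>2 ++ \<Delta>3) (Par D E)"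
    by (intro config_ty.T_Par) auto
  ultimately show "config_ty \<Gamma> \<Delta> (Par C (Par D E))"
    using config_ty.T_Par[of \<Gamma> \<Delta>1 C "\<Delta>2 ++ \<Delta>3" "Par D E"] by auto
qed

lemma config_ty_Par_Nu_extrude:
  assumes fresh: "a \<notin> fv_config C" and "config_ty \<Gamma> \<Delta> (Par C (Nu a D))"
  shows "config_ty \<Gamma> \<Delta> (Nu a (Par C D))"
proof -
  obtain \<Delta>1 \<Delta>2 A where "\<Delta> = \<Delta>1 ++ \<Delta>2" and "dom \<Delta>1 \<inter> dom \<Delta>2 = {}"
    and C: "config_ty \<Gamma> \<Delta>1 C" and D: "config_ty (\<Gamma>(a \<mapsto> TActorRef A)) (\<Delta>2(a \<mapsto> A)) D"
    and "a \<notin> dom \<Delta>2"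
    using assms(2) by (elim config_ty_ParE config_ty_NuE) blast
  moreover have "a \<notin> dom \<Delta>1"
    using config_ty_dom_subset_fv[OF C] fresh by blast
  moreover have "config_ty (\<Gamma>(a \<mapsto> TActorRef A)) \<Delta>1 C"
    using C fresh by (simp add: config_ty_fresh_upd_iff)
  ultimately have "config_ty (\<Gamma>(a \<mapsto> TActorRef A)) (\<Delta>(a \<mapsto> A)) (Par C D)"
    using config_ty.T_Par[of _ \<Delta>1 C "\<Delta>2(a \<mapsto> A)" D] D by auto
  with \<open>a \<notin> dom \<Delta>1\<close> \<open>a \<notin> dom \<Delta>2\<close> \<open>\<Delta> = \<Delta>1 ++ \<Delta>2\<close> show ?thesis
    by (auto intro: config_ty.T_Pid)
qed

lemma config_ty_Nu_Par_intrude: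
  assumes fresh: "a \<notin> fv_config C" and "config_ty \<Gamma> \<Delta> (Nu a (Par C D))"
  shows "config_ty \<Gamma> \<Delta> (Par C (Nu a D))"
proof -
  obtain A \<Delta>1 \<Delta>2 where "a \<notin> dom \<Delta>" and split: "\<Delta>(a \<mapsto> A) = \<Delta>1 ++ \<Delta>2"
    and "dom \<Delta>1 \<inter> dom \<Delta>2 = {}"
    and C: "config_ty (\<Gamma>(a \<mapsto> TActorRef A)) \<Delta>1 C"
    and D: "config_ty (\<Gamma>(a \<mapsto> TActorRef A)) \<Delta>2 D"
    using assms(2) by (elim config_ty_ParE config_ty_NuE) blast
  have "a \<notin> dom \<Delta>1"
    using config_ty_dom_subset_fv[OF C] fresh by blast
  \<comment> \<open>hence \<open>a\<close> is owned by \<open>D\<close>, so \<open>\<Delta>2\<close> splits as \<open>(\<Delta>2(a := None))(a \<mapsto> A)\<close>\<close>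
  then have "\<Delta>2 a = Some A"
    using fun_cong[OF split, of a] by (auto simp: map_add_def domIff split: option.splits)
  then have "config_ty \<Gamma> (\<Delta>2(a := None)) (Nu a D)"
    using D by (intro config_ty.T_Pid[of _ a A]) (auto simp: fun_upd_idem)
  moreover have "\<Delta>1 ++ \<Delta>2(a := None) = \<Delta>"
  proof
    fix x
    show "(\<Delta>1 ++ \<Delta>2(a := None)) x = \<Delta> x"
    proof (cases "x = a")
      case True
      then show ?thesis
        using \<open>a \<notin> dom \<Delta>\<close> \<open>a \<notin> dom \<Delta>1\<close> by (auto simp: map_add_def domIff)
    next
      case False
      then show ?thesis
        using fun_cong[OF split, of x] by (simp add: map_add_def)
    qed
  qed
  ultimately show ?thesis
    using config_ty.T_Par[of \<Gamma> \<Delta>1 C "\<Delta>2(a := None)" "Nu a D"] C fresh \<open>dom \<Delta>1 \<inter> dom \<Delta>2 = {}\<close>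
    by (auto simp: config_ty_fresh_upd_iff)
qed

lemma struct_cong_config_ty_iff:
  "C \<equiv>\<^sub>c D \<Longrightarrow> config_ty \<Gamma> \<Delta> C \<longleftrightarrow> config_ty \<Gamma> \<Delta> D"
proof (induction arbitrary: \<Gamma> \<Delta> rule: struct_cong.induct)
  case (SC_comm C D)
  show ?case by (blast intro: config_ty_Par_commute)
next
  case (SC_assoc C D E)
  show ?case by (rule config_ty_Par_assoc)
next
  case (SC_extr a C D)
  then show ?case by (blast intro: config_ty_Par_Nu_extrude config_ty_Nu_Par_intrude)
next
  case (SC_ctx_par C D E)
  then show ?case by (auto elim!: config_ty_ParE intro: config_ty.T_Par)
next
  case (SC_ctx_nu C D a)
  then show ?case by (auto elim!: config_ty_NuE intro: config_ty.T_Pid)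
qed simp_all

theorem lemma11:
  assumes "config_ty \<Gamma> \<Delta> C"
    and "C \<equiv>\<^sub>c D"
  shows "config_ty \<Gamma> \<Delta> D"
  using assms struct_cong_config_ty_iff by blast

end
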